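(* Let $\mathbf{x}$ be a probability vector for $S$ and define $W_{\rm det}=\sup\{W\in\mathbb{R}:\ \mathbf{x}\otimes(1,0)\succ_g\mathbf{g}\otimes(0,1)\text{ with respect to }H_{SW}(W)\}$. Then the supremum is attained and $$W_{\rm det}=-kT\log\sum_{i:\,x_i\ne0}g_i.$$
   Context: $S$ has Hamiltonian $H_S=\sum_{i=1}^nE_i|i\rangle\langle i|$, $\beta=1/(kT)>0$, $Z_S=\sum_ie^{-\beta E_i}$, Gibbs vector $g_i=e^{-\beta E_i}/Z_S$. The battery is a two-level system with Hamiltonian $W|1\rangle\langle1|$ and $H_{SW}(W)=H_S\otimes\mathbb{I}+\mathbb{I}\otimes W|1\rangle\langle1|$; $\mathbf{x}\otimes(1,0)$ denotes the product distribution with battery in $|0\rangle$, and $\mathbf{g}\otimes(0,1)$ with battery in $|1\rangle$. Thermo-majorisation for a Hamiltonian $H$ with eigenvalues $\epsilon_1,\dots,\epsilon_m$ and $Z=\sum_je^{-\beta\epsilon_j}$: for a probability vector $\mathbf{u}$ let $\pi$ order $u_{\pi(1)}e^{\beta\epsilon_{\pi(1)}}\ge\dots\ge u_{\pi(m)}e^{\beta\epsilon_{\pi(m)}}$; the curve $T(\mathbf{u})$ is the piecewise linear function on $[0,Z]$ joining the origin and $\big(\sum_{j\le k}e^{-\beta\epsilon_{\pi(j)}},\sum_{j\le k}u_{\pi(j)}\big)$, $k=1,\dots,m$; $\mathbf{u}\succ_g\mathbf{v}$ iff $T(\mathbf{u})\ge T(\mathbf{v})$ pointwise. *)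

theory Defs
  imports "HOL-Analysis.Analysis"
begin

definition beta_order ::
  "real \<Rightarrow> ('a \<Rightarrow> real) \<Rightarrow> 'a set \<Rightarrow> ('a \<Rightarrow> real) \<Rightarrow> (nat \<Rightarrow> 'a) \<Rightarrow> bool" where
  "beta_order beta eps A u \<sigma> \<longleftrightarrow>
     bij_betw \<sigma> {0..<card A} A \<and>
     (\<forall>j k. j \<le> k \<and> k < card A \<longrightarrow>
        u (\<sigma> k) * exp (beta * eps (\<sigma> k)) \<le> u (\<sigma> j) * exp (beta * eps (\<sigma> j)))"

definition partfun :: "real \<Rightarrow> ('a \<Rightarrow> real) \<Rightarrow> 'a set \<Rightarrow> real" where
  "partfun beta eps A = (\<Sum>a\<in>A. exp (- beta * eps a))"

definition knot_x :: "real \<Rightarrow> ('a \<Rightarrow> real) \<Rightarrow> (nat \<Rightarrow> 'a) \<Rightarrow> nat \<Rightarrow> real" where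
  "knot_x beta eps \<sigma> k = (\<Sum>j<k. exp (- beta * eps (\<sigma> j)))"

definition knot_y :: "('a \<Rightarrow> real) \<Rightarrow> (nat \<Rightarrow> 'a) \<Rightarrow> nat \<Rightarrow> real" where
  "knot_y u \<sigma> k = (\<Sum>j<k. u (\<sigma> j))"

definition curve_of ::
  "real \<Rightarrow> ('a \<Rightarrow> real) \<Rightarrow> 'a set \<Rightarrow> ('a \<Rightarrow> real) \<Rightarrow> (nat \<Rightarrow> 'a) \<Rightarrow> real \<Rightarrow> real" where
  "curve_of beta eps A u \<sigma> t =
     (let k = (LEAST k. t \<le> knot_x beta eps \<sigma> (Suc k)) in
        knot_y u \<sigma> k + (t - knot_x beta eps \<sigma> k)
          / (knot_x beta eps \<sigma> (Suc k) - knot_x beta eps \<sigma> k)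
          * (knot_y u \<sigma> (Suc k) - knot_y u \<sigma> k))"

text \<open>The thermo-majorisation curve T(u) (using some beta-ordering; the curve does
not depend on how ties are broken).\<close>
definition thermo_curve ::
  "real \<Rightarrow> ('a \<Rightarrow> real) \<Rightarrow> 'a set \<Rightarrow> ('a \<Rightarrow> real) \<Rightarrow> real \<Rightarrow> real" where
  "thermo_curve beta eps A u =
     curve_of beta eps A u (SOME \<sigma>. beta_order beta eps A u \<sigma>)"

definition thermo_maj ::
  "real \<Rightarrow> ('a \<Rightarrow> real) \<Rightarrow> 'a set \<Rightarrow> ('a \<Rightarrow> real) \<Rightarrow> ('a \<Rightarrow> real) \<Rightarrow> bool" where
  "thermo_maj beta eps A u v \<longleftrightarrow>
     (\<forall>t\<in>{0..partfun beta eps A}. thermo_curve beta eps A v t \<le> thermo_curve beta eps A u t)"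

definition gibbs :: "real \<Rightarrow> nat \<Rightarrow> (nat \<Rightarrow> real) \<Rightarrow> nat \<Rightarrow> real" where
  "gibbs beta n E i = exp (- beta * E i) / (\<Sum>j<n. exp (- beta * E j))"

text \<open>System plus two-level battery: levels (i,b), i<n, b\<in>{0,1};
H_SW(W) has energy E i + b W.\<close>
definition SW_levels :: "nat \<Rightarrow> (nat \<times> nat) set" where
  "SW_levels n = {0..<n} \<times> {0, 1}"

definition SW_energy :: "(nat \<Rightarrow> real) \<Rightarrow> real \<Rightarrow> nat \<times> nat \<Rightarrow> real" where
  "SW_energy E W ib = E (fst ib) + (if snd ib = 1 then W else 0)"

text \<open>Product distribution p \<otimes> (1,0) (battery in |0>) and p \<otimes> (0,1) (battery in |1>).\<close>
definition batt0 :: "(nat \<Rightarrow> real) \<Rightarrow> nat \<times> nat \<Rightarrow> real" where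
  "batt0 p ib = (if snd ib = 0 then p (fst ib) else 0)"

definition batt1 :: "(nat \<Rightarrow> real) \<Rightarrow> nat \<times> nat \<Rightarrow> real" where
  "batt1 p ib = (if snd ib = 1 then p (fst ib) else 0)"

end

theory Submission
  imports Defs
begin

text \<open>The thermo-majorisation curve of a probability vector u is concave, so it lies above
the chord min(1, t / Z_P), where Z_P is the partition function of the support P of u, and it
stays strictly below 1 for t < Z_P.  The target g \<otimes> (0,1) is Gibbs-shaped on the levels Q
with the battery charged, so its curve is exactly min(t / Z_Q, 1) with Z_Q = e^{-\<beta>W} Z.
Hence x \<otimes> (1,0) thermo-majorises it iff Z_P \<le> Z_Q; here Z_P = G Z with G the Gibbs weight of
the support of x, so the condition reads e^{-\<beta>W} \<ge> G, i.e. W \<le> -kT log G.\<close>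

lemma knot_x_0 [simp]: "knot_x b e \<sigma> 0 = 0"
  by (simp add: knot_x_def)

lemma knot_x_split:
  "k \<le> l \<Longrightarrow> knot_x b e \<sigma> l = knot_x b e \<sigma> k + (\<Sum>j\<in>{k..<l}. exp (- b * e (\<sigma> j)))"
  unfolding knot_x_def lessThan_atLeast0 by (simp add: sum.atLeastLessThan_concat)

lemma knot_y_split:
  "k \<le> l \<Longrightarrow> knot_y u \<sigma> l = knot_y u \<sigma> k + (\<Sum>j\<in>{k..<l}. u (\<sigma> j))"
  unfolding knot_y_def lessThan_atLeast0 by (simp add: sum.atLeastLessThan_concat)

lemma knot_x_mono: "k \<le> l \<Longrightarrow> knot_x b e \<sigma> k \<le> knot_x b e \<sigma> l"
  unfolding knot_x_def by (rule sum_mono2) auto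

lemma knot_x_strict_mono: "k < l \<Longrightarrow> knot_x b e \<sigma> k < knot_x b e \<sigma> l"
  using knot_x_split[of k l b e \<sigma>] by (simp add: sum_pos)

lemma knot_y_mono:
  "k \<le> l \<Longrightarrow> (\<forall>j<l. 0 \<le> u (\<sigma> j)) \<Longrightarrow> knot_y u \<sigma> k \<le> knot_y u \<sigma> l"
  unfolding knot_y_def by (rule sum_mono2) auto

lemma beta_order_bij: "beta_order b e A u \<sigma> \<Longrightarrow> bij_betw \<sigma> {0..<card A} A"
  unfolding beta_order_def by blast

lemma beta_order_in: "beta_order b e A u \<sigma> \<Longrightarrow> j < card A \<Longrightarrow> \<sigma> j \<in> A"
  using bij_betw_apply[OF beta_order_bij] by fastforce

lemma beta_order_mono:
  "beta_order b e A u \<sigma> \<Longrightarrow> j \<le> k \<Longrightarrow> k < card A \<Longrightarrow>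
     u (\<sigma> k) * exp (b * e (\<sigma> k)) \<le> u (\<sigma> j) * exp (b * e (\<sigma> j))"
  unfolding beta_order_def by blast

lemma knot_x_card: "beta_order b e A u \<sigma> \<Longrightarrow> knot_x b e \<sigma> (card A) = partfun b e A"
  unfolding knot_x_def partfun_def lessThan_atLeast0
  by (rule sum.reindex_bij_betw[OF beta_order_bij])

lemma knot_y_card: "beta_order b e A u \<sigma> \<Longrightarrow> knot_y u \<sigma> (card A) = (\<Sum>a\<in>A. u a)"
  unfolding knot_y_def lessThan_atLeast0
  by (rule sum.reindex_bij_betw[OF beta_order_bij])

lemma knot_y_le_knot_x:
  assumes "beta_order b e A u \<sigma>" "\<forall>a\<in>A. u a \<le> M * exp (- b * e a)" "j \<le> card A"
  shows "knot_y u \<sigma> j \<le> M * knot_x b e \<sigma> j"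
  unfolding knot_y_def knot_x_def sum_distrib_left
  using assms beta_order_in[OF assms(1)] by (intro sum_mono) auto

lemma knot_y_le_total:
  assumes "beta_order b e A u \<sigma>" "\<forall>a\<in>A. 0 \<le> u a" "j \<le> card A"
  shows "knot_y u \<sigma> j \<le> (\<Sum>a\<in>A. u a)"
  using knot_y_mono[of j "card A" u \<sigma>] assms beta_order_in[OF assms(1)] knot_y_card[OF assms(1)]
  by simp

lemma beta_order_exists:
  assumes "finite A"
  shows "\<exists>\<sigma>. beta_order b e A u \<sigma>"
proof -
  define f where "f = (\<lambda>a. - (u a * exp (b * e a)))"
  obtain ys where ys: "set ys = A" "distinct ys"
    using finite_distinct_list[OF assms] by blast
  define xs where "xs = sort_key f ys"
  have xs: "distinct xs" "set xs = A" "sorted (map f xs)"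
    unfolding xs_def using ys by simp_all
  have len: "length xs = card A"
    using distinct_card[OF xs(1)] xs(2) by simp
  have "bij_betw ((!) xs) {0..<card A} A"
    by (rule bij_betw_nth[OF xs(1)]) (auto simp: len xs(2))
  moreover have "u (xs ! k) * exp (b * e (xs ! k)) \<le> u (xs ! j) * exp (b * e (xs ! j))"
    if "j \<le> k" "k < card A" for j k
    using sorted_nth_mono[OF xs(3), of j k] that len by (simp add: f_def)
  ultimately show ?thesis
    unfolding beta_order_def by blast
qed

lemma mult_exp_swap_le:
  fixes a b c p q :: real
  assumes "a * exp (b * p) \<le> c * exp (b * q)"
  shows "a * exp (- b * q) \<le> c * exp (- b * p)"
proof -
  have "a * exp (- b * q) = a * exp (b * p) * (exp (- b * p) * exp (- b * q))"
       "c * exp (- b * p) = c * exp (b * q) * (exp (- b * p) * exp (- b * q))"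
    by (simp_all add: exp_minus field_simps)
  then show ?thesis
    by (simp only:) (rule mult_right_mono[OF assms], simp)
qed

text \<open>Concavity of the curve: the slopes u(\<sigma> j) e^{\<beta> e(\<sigma> j)} of its pieces decrease,
so the chord from the origin to a later knot lies below an earlier knot.\<close>
lemma knot_chord:
  assumes bo: "beta_order b e A u \<sigma>" and "k \<le> l" "l \<le> card A"
  shows "knot_y u \<sigma> l * knot_x b e \<sigma> k \<le> knot_y u \<sigma> k * knot_x b e \<sigma> l"
proof -
  define Dy where "Dy = (\<Sum>i\<in>{k..<l}. u (\<sigma> i))"
  define Dx where "Dx = (\<Sum>i\<in>{k..<l}. exp (- b * e (\<sigma> i)))"
  have "Dy * knot_x b e \<sigma> k = (\<Sum>i\<in>{k..<l}. \<Sum>j<k. u (\<sigma> i) * exp (- b * e (\<sigma> j)))"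
    unfolding Dy_def knot_x_def by (simp add: sum_distrib_left sum_distrib_right) (rule sum.swap)
  also have "\<dots> \<le> (\<Sum>i\<in>{k..<l}. \<Sum>j<k. u (\<sigma> j) * exp (- b * e (\<sigma> i)))"
    using \<open>l \<le> card A\<close> by (intro sum_mono mult_exp_swap_le beta_order_mono[OF bo]) auto
  also have "\<dots> = knot_y u \<sigma> k * Dx"
    unfolding Dx_def knot_y_def
    by (simp add: sum_distrib_left sum_distrib_right sum.swap[of _ "{..<k}"])
  finally have "Dy * knot_x b e \<sigma> k \<le> knot_y u \<sigma> k * Dx" .
  moreover have "knot_y u \<sigma> l = knot_y u \<sigma> k + Dy" "knot_x b e \<sigma> l = knot_x b e \<sigma> k + Dx"
    using \<open>k \<le> l\<close> knot_y_split knot_x_split Dy_def Dx_def by auto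
  ultimately show ?thesis
    by (simp add: algebra_simps)
qed

lemma curve_of_interpolates:
  assumes "0 < m" "0 \<le> t" "t \<le> knot_x b e \<sigma> m"
  obtains k l where "k < m" "0 \<le> l" "l \<le> 1"
    "t = (1 - l) * knot_x b e \<sigma> k + l * knot_x b e \<sigma> (Suc k)"
    "curve_of b e A u \<sigma> t = (1 - l) * knot_y u \<sigma> k + l * knot_y u \<sigma> (Suc k)"
proof -
  let ?P = "\<lambda>k. t \<le> knot_x b e \<sigma> (Suc k)"
  define k where "k = (LEAST k. ?P k)"
  have ex: "?P (m - 1)"
    using assms by simp
  have upper: "t \<le> knot_x b e \<sigma> (Suc k)"
    unfolding k_def by (rule LeastI[of ?P, OF ex])
  have "k \<le> m - 1"
    unfolding k_def by (rule Least_le[of ?P, OF ex])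
  have lower: "knot_x b e \<sigma> k \<le> t"
  proof (cases k)
    case (Suc j)
    then show ?thesis
      using not_less_Least[of j ?P] k_def by fastforce
  qed (use assms in simp)
  define d where "d = knot_x b e \<sigma> (Suc k) - knot_x b e \<sigma> k"
  have "d > 0"
    unfolding d_def using knot_x_strict_mono[of k "Suc k"] by simp
  define l where "l = (t - knot_x b e \<sigma> k) / d"
  have "l * d = t - knot_x b e \<sigma> k"
    unfolding l_def using \<open>d > 0\<close> by simp
  then have "t = (1 - l) * knot_x b e \<sigma> k + l * knot_x b e \<sigma> (Suc k)"
    unfolding d_def by (simp add: algebra_simps)
  moreover have "curve_of b e A u \<sigma> t = knot_y u \<sigma> k + l * (knot_y u \<sigma> (Suc k) - knot_y u \<sigma> k)"
    unfolding curve_of_def Let_def k_def[symmetric] l_def d_def by simp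
  then have "curve_of b e A u \<sigma> t = (1 - l) * knot_y u \<sigma> k + l * knot_y u \<sigma> (Suc k)"
    by (simp add: algebra_simps)
  moreover have "0 \<le> l" "l \<le> 1"
    unfolding l_def using lower upper \<open>d > 0\<close> by (simp_all add: d_def)
  moreover have "k < m"
    using \<open>k \<le> m - 1\<close> \<open>0 < m\<close> by simp
  ultimately show ?thesis
    using that by blast
qed

lemma curve_of_interpolates_ordered:
  assumes "beta_order b e A u \<sigma>" "0 < card A" "0 \<le> t" "t \<le> partfun b e A"
  obtains k l where "k < card A" "0 \<le> l" "l \<le> 1"
    "t = (1 - l) * knot_x b e \<sigma> k + l * knot_x b e \<sigma> (Suc k)"
    "curve_of b e A u \<sigma> t = (1 - l) * knot_y u \<sigma> k + l * knot_y u \<sigma> (Suc k)"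
proof -
  have "t \<le> knot_x b e \<sigma> (card A)"
    using assms(4) knot_x_card[OF assms(1)] by simp
  from curve_of_interpolates[OF assms(2,3) this, where A = A and u = u] that show ?thesis
    by blast
qed

lemma curve_of_le_affine:
  assumes bo: "beta_order b e A u \<sigma>" and "0 < card A" "0 \<le> t" "t \<le> partfun b e A"
    and knots: "\<And>j. j \<le> card A \<Longrightarrow> knot_y u \<sigma> j \<le> c * knot_x b e \<sigma> j + d"
  shows "curve_of b e A u \<sigma> t \<le> c * t + d"
proof -
  obtain k l where k: "k < card A" and l: "0 \<le> l" "l \<le> 1"
    and t: "t = (1 - l) * knot_x b e \<sigma> k + l * knot_x b e \<sigma> (Suc k)"
    and curve: "curve_of b e A u \<sigma> t = (1 - l) * knot_y u \<sigma> k + l * knot_y u \<sigma> (Suc k)"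
    using curve_of_interpolates_ordered[OF bo assms(2-4)] by blast
  have "curve_of b e A u \<sigma> t \<le>
      (1 - l) * (c * knot_x b e \<sigma> k + d) + l * (c * knot_x b e \<sigma> (Suc k) + d)"
    unfolding curve using l k knots by (intro add_mono mult_left_mono) auto
  also have "\<dots> = c * t + d"
    unfolding t by (simp add: algebra_simps)
  finally show ?thesis .
qed

lemma curve_of_ge_chord:
  assumes bo: "beta_order b e A u \<sigma>" and nonneg: "\<forall>a\<in>A. 0 \<le> u a"
    and K: "0 < K" "K \<le> card A" and "0 \<le> t" "t \<le> partfun b e A"
  shows "min (knot_y u \<sigma> K) (t * knot_y u \<sigma> K / knot_x b e \<sigma> K) \<le> curve_of b e A u \<sigma> t"
proof -
  have "0 < card A"
    using K by simp
  then obtain k l where k: "k < card A" and l: "0 \<le> l" "l \<le> 1"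
    and t: "t = (1 - l) * knot_x b e \<sigma> k + l * knot_x b e \<sigma> (Suc k)"
    and curve: "curve_of b e A u \<sigma> t = (1 - l) * knot_y u \<sigma> k + l * knot_y u \<sigma> (Suc k)"
    using curve_of_interpolates_ordered[OF bo _ assms(5,6)] by blast
  have nonneg_knots: "\<forall>j<card A. 0 \<le> u (\<sigma> j)"
    using nonneg beta_order_in[OF bo] by auto
  have "knot_x b e \<sigma> K > 0"
    using knot_x_strict_mono[of 0 K] K by simp
  show ?thesis
  proof (cases "Suc k \<le> K")
    case True
    have "t * knot_y u \<sigma> K = (1 - l) * (knot_y u \<sigma> K * knot_x b e \<sigma> k)
        + l * (knot_y u \<sigma> K * knot_x b e \<sigma> (Suc k))"
      unfolding t by (simp add: algebra_simps)
    also have "\<dots> \<le> (1 - l) * (knot_y u \<sigma> k * knot_x b e \<sigma> K)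
        + l * (knot_y u \<sigma> (Suc k) * knot_x b e \<sigma> K)"
      using l True K by (intro add_mono mult_left_mono knot_chord[OF bo]) auto
    also have "\<dots> = curve_of b e A u \<sigma> t * knot_x b e \<sigma> K"
      unfolding curve by (simp add: algebra_simps)
    finally have "t * knot_y u \<sigma> K / knot_x b e \<sigma> K \<le> curve_of b e A u \<sigma> t"
      using \<open>knot_x b e \<sigma> K > 0\<close> by (simp add: divide_le_eq)
    then show ?thesis
      by simp
  next
    case False
    have "knot_y u \<sigma> K \<le> knot_y u \<sigma> k" "knot_y u \<sigma> k \<le> knot_y u \<sigma> (Suc k)"
      using False nonneg_knots k by (auto intro: knot_y_mono)
    then have "(1 - l) * knot_y u \<sigma> K + l * knot_y u \<sigma> K \<le> curve_of b e A u \<sigma> t"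
      unfolding curve using l by (intro add_mono mult_left_mono) auto
    then show ?thesis
      by (simp add: algebra_simps)
  qed
qed

lemma beta_order_zero_tail:
  assumes bo: "beta_order b e A u \<sigma>" and nonneg: "\<forall>a\<in>A. 0 \<le> u a"
    and "j \<le> i" "i < card A" "u (\<sigma> j) = 0"
  shows "u (\<sigma> i) = 0"
proof -
  have "u (\<sigma> i) * exp (b * e (\<sigma> i)) \<le> 0"
    using beta_order_mono[OF bo \<open>j \<le> i\<close> \<open>i < card A\<close>] \<open>u (\<sigma> j) = 0\<close> by simp
  then have "u (\<sigma> i) \<le> 0"
    by (simp add: mult_le_0_iff)
  moreover have "0 \<le> u (\<sigma> i)"
    using nonneg beta_order_in[OF bo \<open>i < card A\<close>] by blast
  ultimately show ?thesis
    by simp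
qed

lemma beta_order_support_image:
  assumes bo: "beta_order b e A u \<sigma>" and fin: "finite A" and nonneg: "\<forall>a\<in>A. 0 \<le> u a"
  defines "P \<equiv> {a\<in>A. u a \<noteq> 0}"
  shows "\<sigma> ` {0..<card P} = P"
proof -
  have "P \<subseteq> A"
    unfolding P_def by auto
  then have "card P \<le> card A" "finite P"
    using card_mono[OF fin] rev_finite_subset[OF fin] by simp_all
  have img: "\<sigma> ` {0..<card A} = A" and inj: "inj_on \<sigma> {0..<card A}"
    using beta_order_bij[OF bo] by (auto simp: bij_betw_def)
  have "\<sigma> j \<in> P" if j: "j < card P" for j
  proof (rule ccontr)
    assume "\<sigma> j \<notin> P"
    moreover have "\<sigma> j \<in> A"
      using beta_order_in[OF bo] j \<open>card P \<le> card A\<close> by simp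
    ultimately have "u (\<sigma> j) = 0"
      unfolding P_def by simp
    have "P \<subseteq> \<sigma> ` {0..<j}"
    proof
      fix a assume "a \<in> P"
      then obtain i where i: "i < card A" "a = \<sigma> i"
        using \<open>P \<subseteq> A\<close> img by (metis atLeastLessThan_iff imageE subsetD)
      have "i < j"
      proof (rule ccontr)
        assume "\<not> i < j"
        then have "u a = 0"
          using beta_order_zero_tail[OF bo nonneg, of j i] i \<open>u (\<sigma> j) = 0\<close> by simp
        then show False
          using \<open>a \<in> P\<close> unfolding P_def by simp
      qed
      then show "a \<in> \<sigma> ` {0..<j}"
        using i by simp
    qed
    then have "card P \<le> j"
      using card_mono[of "\<sigma> ` {0..<j}" P] card_image_le[of "{0..<j}" \<sigma>] by simp
    then show False
      using j by simp
  qed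
  then have "\<sigma> ` {0..<card P} \<subseteq> P"
    by auto
  moreover have "inj_on \<sigma> {0..<card P}"
    using inj_on_subset[OF inj] \<open>card P \<le> card A\<close> by auto
  ultimately show ?thesis
    using card_subset_eq[OF \<open>finite P\<close>] card_image[of \<sigma> "{0..<card P}"] by simp
qed

text \<open>The levels where u vanishes come last in a \<beta>-ordering, so the knot after the
support of u already carries the whole mass.\<close>
lemma beta_order_support:
  assumes bo: "beta_order b e A u \<sigma>" and fin: "finite A" and nonneg: "\<forall>a\<in>A. 0 \<le> u a"
  defines "P \<equiv> {a\<in>A. u a \<noteq> 0}"
  shows "knot_y u \<sigma> (card P) = (\<Sum>a\<in>A. u a)"
    and "knot_x b e \<sigma> (card P) = partfun b e P"
proof -
  note image = beta_order_support_image[OF bo fin nonneg, folded P_def]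
  have "card P \<le> card A"
    unfolding P_def by (rule card_mono[OF fin]) auto
  then have inj: "inj_on \<sigma> {0..<card P}"
    using inj_on_subset beta_order_bij[OF bo] by (fastforce simp: bij_betw_def)
  have "knot_y u \<sigma> (card P) = (\<Sum>a\<in>\<sigma> ` {0..<card P}. u a)"
    unfolding knot_y_def lessThan_atLeast0 sum.reindex[OF inj] by simp
  also have "\<dots> = (\<Sum>a\<in>P. u a)"
    unfolding image ..
  also have "\<dots> = (\<Sum>a\<in>A. u a)"
    unfolding P_def by (rule sum.mono_neutral_left[OF fin]) auto
  finally show "knot_y u \<sigma> (card P) = (\<Sum>a\<in>A. u a)" .
  have "knot_x b e \<sigma> (card P) = (\<Sum>a\<in>\<sigma> ` {0..<card P}. exp (- b * e a))"
    unfolding knot_x_def lessThan_atLeast0 sum.reindex[OF inj] by simp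
  then show "knot_x b e \<sigma> (card P) = partfun b e P"
    unfolding image partfun_def .
qed

lemma knot_y_less_total:
  assumes bo: "beta_order b e A u \<sigma>" and fin: "finite A" and nonneg: "\<forall>a\<in>A. 0 \<le> u a"
    and j: "j < card {a\<in>A. u a \<noteq> 0}"
  shows "knot_y u \<sigma> j < (\<Sum>a\<in>A. u a)"
proof -
  define P where "P = {a\<in>A. u a \<noteq> 0}"
  have "card P \<le> card A"
    unfolding P_def by (rule card_mono[OF fin]) auto
  have "0 < u (\<sigma> j)"
    using beta_order_support_image[OF bo fin nonneg] j nonneg by force
  moreover have "u (\<sigma> j) \<le> (\<Sum>i\<in>{j..<card P}. u (\<sigma> i))"
    using j nonneg beta_order_in[OF bo] \<open>card P \<le> card A\<close> unfolding P_def
    by (intro member_le_sum) auto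
  ultimately show ?thesis
    using knot_y_split[of j "card P" u \<sigma>] j beta_order_support(1)[OF bo fin nonneg]
    unfolding P_def by simp
qed

lemma curve_of_less_total:
  assumes bo: "beta_order b e A u \<sigma>" and fin: "finite A" and nonneg: "\<forall>a\<in>A. 0 \<le> u a"
    and "0 \<le> t" and less: "t < partfun b e {a\<in>A. u a \<noteq> 0}"
  shows "curve_of b e A u \<sigma> t < (\<Sum>a\<in>A. u a)"
proof -
  define P where "P = {a\<in>A. u a \<noteq> 0}"
  define S where "S = (\<Sum>a\<in>A. u a)"
  note below = knot_y_less_total[OF bo fin nonneg, folded P_def S_def]
  have "card P \<le> card A"
    unfolding P_def by (rule card_mono[OF fin]) auto
  have tP: "t < knot_x b e \<sigma> (card P)"
    using less beta_order_support(2)[OF bo fin nonneg] P_def by simp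
  then have "0 < card A"
    using \<open>0 \<le> t\<close> \<open>card P \<le> card A\<close> by (cases "card P") auto
  moreover have "t \<le> partfun b e A"
    using tP knot_x_mono[OF \<open>card P \<le> card A\<close>, of b e \<sigma>] knot_x_card[OF bo] by simp
  ultimately obtain k l where k: "k < card A" and l: "0 \<le> l" "l \<le> 1"
    and t: "t = (1 - l) * knot_x b e \<sigma> k + l * knot_x b e \<sigma> (Suc k)"
    and curve: "curve_of b e A u \<sigma> t = (1 - l) * knot_y u \<sigma> k + l * knot_y u \<sigma> (Suc k)"
    using curve_of_interpolates_ordered[OF bo _ \<open>0 \<le> t\<close>] by blast
  have "knot_x b e \<sigma> k \<le> knot_x b e \<sigma> (Suc k)"
    by (rule knot_x_mono) simp
  then have "(1 - l) * knot_x b e \<sigma> k + l * knot_x b e \<sigma> k \<le> t"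
    unfolding t using l by (intro add_mono mult_left_mono) auto
  then have "knot_x b e \<sigma> k < knot_x b e \<sigma> (card P)"
    using tP by (simp add: algebra_simps)
  then have "k < card P"
    using knot_x_mono[of "card P" k b e \<sigma>] by (meson not_le)
  have "knot_y u \<sigma> (Suc k) \<le> S"
    using knot_y_le_total[OF bo nonneg, of "Suc k"] k S_def by simp
  show ?thesis
  proof (cases "l < 1")
    case True
    then have "(1 - l) * knot_y u \<sigma> k + l * knot_y u \<sigma> (Suc k) < (1 - l) * S + l * S"
      using below[OF \<open>k < card P\<close>] \<open>knot_y u \<sigma> (Suc k) \<le> S\<close> l
      by (intro add_less_le_mono mult_strict_left_mono mult_left_mono) auto
    then show ?thesis
      unfolding curve S_def[symmetric] by (simp add: algebra_simps)
  next
    case False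
    then have "l = 1"
      using l by simp
    then have "knot_x b e \<sigma> (Suc k) < knot_x b e \<sigma> (card P)"
      using tP t by simp
    then have "Suc k < card P"
      using knot_x_mono[of "card P" "Suc k" b e \<sigma>] by (meson not_le)
    then show ?thesis
      using below curve \<open>l = 1\<close> S_def by simp
  qed
qed

lemma thermo_curve_obtain_order:
  assumes "finite A"
  obtains \<sigma> where "beta_order b e A u \<sigma>" "thermo_curve b e A u = curve_of b e A u \<sigma>"
  using someI_ex[OF beta_order_exists[OF assms]] that
  unfolding thermo_curve_def by blast

lemma support_nonempty:
  fixes u :: "'a \<Rightarrow> real"
  assumes "(\<Sum>a\<in>A. u a) = 1"
  shows "{a\<in>A. u a \<noteq> 0} \<noteq> {}"
proof
  assume "{a\<in>A. u a \<noteq> 0} = {}"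
  then have "(\<Sum>a\<in>A. u a) = 0"
    by (intro sum.neutral) auto
  with assms show False
    by simp
qed

lemma thermo_curve_ge_chord:
  assumes fin: "finite A" and nonneg: "\<forall>a\<in>A. 0 \<le> u a" and mass: "(\<Sum>a\<in>A. u a) = 1"
    and "0 \<le> t" "t \<le> partfun b e A"
  shows "min 1 (t / partfun b e {a\<in>A. u a \<noteq> 0}) \<le> thermo_curve b e A u t"
proof -
  define P where "P = {a\<in>A. u a \<noteq> 0}"
  obtain \<sigma> where \<sigma>: "beta_order b e A u \<sigma>" "thermo_curve b e A u = curve_of b e A u \<sigma>"
    using thermo_curve_obtain_order[OF fin] .
  have "finite P" "card P \<le> card A"
    using fin unfolding P_def by (auto intro: card_mono)
  moreover have "P \<noteq> {}"
    unfolding P_def using support_nonempty[OF mass] .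
  ultimately have "0 < card P"
    by (simp add: card_gt_0_iff)
  then show ?thesis
    using curve_of_ge_chord[OF \<sigma>(1) nonneg _ \<open>card P \<le> card A\<close> assms(4,5)]
      beta_order_support[OF \<sigma>(1) fin nonneg] \<sigma>(2) mass unfolding P_def by simp
qed

lemma thermo_curve_less_one:
  assumes fin: "finite A" and nonneg: "\<forall>a\<in>A. 0 \<le> u a" and mass: "(\<Sum>a\<in>A. u a) = 1"
    and "0 \<le> t" "t < partfun b e {a\<in>A. u a \<noteq> 0}"
  shows "thermo_curve b e A u t < 1"
proof -
  obtain \<sigma> where \<sigma>: "beta_order b e A u \<sigma>" "thermo_curve b e A u = curve_of b e A u \<sigma>"
    using thermo_curve_obtain_order[OF fin] .
  show ?thesis
    using curve_of_less_total[OF \<sigma>(1) fin nonneg assms(4,5)] \<sigma>(2) mass by simp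
qed

lemma thermo_curve_le_slope:
  assumes fin: "finite A" and nonneg: "\<forall>a\<in>A. 0 \<le> u a" and mass: "(\<Sum>a\<in>A. u a) = 1"
    and slope: "\<forall>a\<in>A. u a \<le> M * exp (- b * e a)"
    and "0 \<le> t" "t \<le> partfun b e A"
  shows "thermo_curve b e A u t \<le> min (M * t) 1"
proof -
  obtain \<sigma> where \<sigma>: "beta_order b e A u \<sigma>" "thermo_curve b e A u = curve_of b e A u \<sigma>"
    using thermo_curve_obtain_order[OF fin] .
  have "0 < card A"
    using mass fin by (cases "A = {}") (auto simp: card_gt_0_iff)
  have "curve_of b e A u \<sigma> t \<le> M * t + 0"
    using curve_of_le_affine[OF \<sigma>(1) \<open>0 < card A\<close> assms(5,6), of M 0]
      knot_y_le_knot_x[OF \<sigma>(1) slope] by simp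
  moreover have "curve_of b e A u \<sigma> t \<le> 0 * t + 1"
    using curve_of_le_affine[OF \<sigma>(1) \<open>0 < card A\<close> assms(5,6), of 0 1]
      knot_y_le_total[OF \<sigma>(1) nonneg] mass by simp
  ultimately show ?thesis
    using \<sigma>(2) by simp
qed

lemma gibbs_shaped_distribution:
  assumes fin: "finite A" and "Q \<subseteq> A" "Q \<noteq> {}"
    and v: "\<forall>a\<in>A. v a = (if a \<in> Q then exp (- b * e a) / partfun b e Q else 0)"
  shows "partfun b e Q > 0" "\<forall>a\<in>A. 0 \<le> v a" "(\<Sum>a\<in>A. v a) = 1"
    "{a\<in>A. v a \<noteq> 0} = Q" "\<forall>a\<in>A. v a \<le> 1 / partfun b e Q * exp (- b * e a)"
proof -
  define X where "X = partfun b e Q"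
  have "finite Q"
    using \<open>Q \<subseteq> A\<close> fin finite_subset by blast
  then show "X > 0"
    unfolding X_def partfun_def using \<open>Q \<noteq> {}\<close> by (intro sum_pos) auto
  then show "\<forall>a\<in>A. 0 \<le> v a" "{a\<in>A. v a \<noteq> 0} = Q" "\<forall>a\<in>A. v a \<le> 1 / X * exp (- b * e a)"
    using v \<open>Q \<subseteq> A\<close> X_def by (auto split: if_splits)
  have "(\<Sum>a\<in>A. v a) = (\<Sum>a\<in>A. if a \<in> Q then exp (- b * e a) / X else 0)"
    using v X_def by (intro sum.cong) auto
  also have "\<dots> = (\<Sum>a\<in>Q. exp (- b * e a)) / X"
    using fin \<open>Q \<subseteq> A\<close> by (simp add: sum.If_cases Int_absorb1 sum_divide_distrib)
  finally show "(\<Sum>a\<in>A. v a) = 1"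
    using \<open>X > 0\<close> unfolding X_def partfun_def by simp
qed

lemma thermo_maj_gibbs_shaped_iff:
  assumes fin: "finite A" and nonneg: "\<forall>a\<in>A. 0 \<le> u a" and mass: "(\<Sum>a\<in>A. u a) = 1"
    and "Q \<subseteq> A" "Q \<noteq> {}"
    and v: "\<forall>a\<in>A. v a = (if a \<in> Q then exp (- b * e a) / partfun b e Q else 0)"
  shows "thermo_maj b e A u v \<longleftrightarrow> partfun b e {a\<in>A. u a \<noteq> 0} \<le> partfun b e Q"
proof -
  define X where "X = partfun b e Q"
  define Y where "Y = partfun b e {a\<in>A. u a \<noteq> 0}"
  note v_props = gibbs_shaped_distribution[OF fin \<open>Q \<subseteq> A\<close> \<open>Q \<noteq> {}\<close> v, folded X_def]
  have "X \<le> partfun b e A"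
    unfolding X_def partfun_def using fin \<open>Q \<subseteq> A\<close> by (intro sum_mono2) auto
  have "Y > 0"
    unfolding Y_def partfun_def using fin support_nonempty[OF mass] by (intro sum_pos) auto
  show ?thesis
    unfolding thermo_maj_def X_def[symmetric] Y_def[symmetric]
  proof
    assume maj: "\<forall>t\<in>{0..partfun b e A}. thermo_curve b e A v t \<le> thermo_curve b e A u t"
    show "Y \<le> X"
    proof (rule ccontr)
      assume "\<not> Y \<le> X"
      then have "thermo_curve b e A u X < 1"
        using thermo_curve_less_one[OF fin nonneg mass] \<open>0 < X\<close> Y_def by simp
      moreover have "1 \<le> thermo_curve b e A v X"
        using thermo_curve_ge_chord[OF fin v_props(2,3), where t = X and b = b and e = e] v_props(1,4)
          \<open>X \<le> partfun b e A\<close> X_def by simp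
      moreover have "thermo_curve b e A v X \<le> thermo_curve b e A u X"
        using maj \<open>0 < X\<close> \<open>X \<le> partfun b e A\<close> by simp
      ultimately show False
        by simp
    qed
  next
    assume "Y \<le> X"
    show "\<forall>t\<in>{0..partfun b e A}. thermo_curve b e A v t \<le> thermo_curve b e A u t"
    proof
      fix t assume t: "t \<in> {0..partfun b e A}"
      have "thermo_curve b e A v t \<le> min (t / X) 1"
        using thermo_curve_le_slope[OF fin v_props(2,3,5)] t by simp
      moreover have "min 1 (t / Y) \<le> thermo_curve b e A u t"
        using thermo_curve_ge_chord[OF fin nonneg mass] t Y_def by simp
      moreover have "t / X \<le> t / Y"
        using t \<open>Y \<le> X\<close> \<open>Y > 0\<close> by (simp add: frac_le)
      ultimately show "thermo_curve b e A v t \<le> thermo_curve b e A u t"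
        by (simp add: min_def split: if_splits)
    qed
  qed
qed

lemma sum_SW_levels: "(\<Sum>a\<in>SW_levels n. f a) = (\<Sum>i<n. f (i, 0) + f (i, 1))"
  unfolding SW_levels_def lessThan_atLeast0 sum.cartesian_product' by simp

lemma battery_thermo_maj_iff:
  assumes x_nonneg: "\<forall>i<n. 0 \<le> x i" and x_sum: "(\<Sum>i<n. x i) = 1"
  shows "thermo_maj beta (SW_energy E W) (SW_levels n) (batt0 x) (batt1 (gibbs beta n E))
    \<longleftrightarrow> (\<Sum>i\<in>{i. i < n \<and> x i \<noteq> 0}. gibbs beta n E i) \<le> exp (- beta * W)"
proof -
  define Z where "Z = (\<Sum>i<n. exp (- beta * E i))"
  define I where "I = {i. i < n \<and> x i \<noteq> 0}"
  define Q where "Q = {0..<n} \<times> {1::nat}"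
  have "0 < n"
    using x_sum by (cases n) auto
  then have "Z > 0"
    unfolding Z_def by (intro sum_pos) auto
  have gibbs: "gibbs beta n E i = exp (- beta * E i) / Z" for i
    unfolding gibbs_def Z_def ..
  have exp_shift: "exp (- (beta * (E i + W))) = exp (- beta * W) * exp (- beta * E i)" for i
    by (simp add: mult_exp_exp algebra_simps)
  have partfun_Q: "partfun beta (SW_energy E W) Q = exp (- beta * W) * Z"
    unfolding partfun_def Q_def Z_def lessThan_atLeast0 sum.cartesian_product'
    by (simp add: SW_energy_def exp_shift sum_distrib_left)
  have "{a\<in>SW_levels n. batt0 x a \<noteq> 0} = (\<lambda>i. (i, 0)) ` I"
    unfolding SW_levels_def batt0_def I_def by force
  then have "partfun beta (SW_energy E W) {a\<in>SW_levels n. batt0 x a \<noteq> 0}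
      = (\<Sum>i\<in>I. exp (- beta * E i))"
    unfolding partfun_def by (simp add: sum.reindex inj_on_def SW_energy_def)
  also have "\<dots> = (\<Sum>i\<in>I. gibbs beta n E i) * Z"
    unfolding gibbs using \<open>Z > 0\<close> by (simp add: sum_divide_distrib[symmetric])
  finally have partfun_support: "partfun beta (SW_energy E W) {a\<in>SW_levels n. batt0 x a \<noteq> 0}
      = (\<Sum>i\<in>I. gibbs beta n E i) * Z" .
  have "\<forall>a\<in>SW_levels n. batt1 (gibbs beta n E) a =
      (if a \<in> Q then exp (- beta * SW_energy E W a) / partfun beta (SW_energy E W) Q else 0)"
    unfolding partfun_Q using \<open>Z > 0\<close>
    by (auto simp: SW_levels_def Q_def batt1_def gibbs SW_energy_def exp_shift)
  moreover have "finite (SW_levels n)" "Q \<subseteq> SW_levels n" "Q \<noteq> {}"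
    using \<open>0 < n\<close> unfolding SW_levels_def Q_def by auto
  moreover have "\<forall>a\<in>SW_levels n. 0 \<le> batt0 x a" "(\<Sum>a\<in>SW_levels n. batt0 x a) = 1"
    using x_nonneg x_sum by (auto simp: batt0_def sum_SW_levels, auto simp: SW_levels_def)
  ultimately show ?thesis
    using thermo_maj_gibbs_shaped_iff[of "SW_levels n" "batt0 x" Q] partfun_Q partfun_support
      \<open>Z > 0\<close> I_def by simp
qed

lemma gibbs_support_pos:
  assumes "(\<Sum>i<n. x i) = (1::real)"
  shows "0 < (\<Sum>i\<in>{i. i < n \<and> x i \<noteq> 0}. gibbs beta n E i)"
proof -
  obtain i where "i < n" "x i \<noteq> 0"
    using assms by (metis (mono_tags, lifting) sum.neutral zero_neq_one lessThan_iff)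
  moreover from \<open>i < n\<close> have "(\<Sum>j<n. exp (- beta * E j)) > 0"
    by (intro sum_pos) auto
  ultimately show ?thesis
    unfolding gibbs_def by (intro sum_pos2[of _ i]) auto
qed

theorem mainTheorem8:
  fixes n :: nat and E :: "nat \<Rightarrow> real" and beta :: real and x :: "nat \<Rightarrow> real"
  assumes beta_pos: "beta > 0"
    and x_nonneg: "\<forall>i<n. x i \<ge> 0"
    and x_sum: "(\<Sum>i<n. x i) = 1"
  defines "Wset \<equiv> {W::real. thermo_maj beta (SW_energy E W) (SW_levels n)
                               (batt0 x) (batt1 (gibbs beta n E))}"
  shows "Sup Wset \<in> Wset \<and> (\<forall>W\<in>Wset. W \<le> Sup Wset) \<and>
         Sup Wset = - (1 / beta) * ln (\<Sum>i\<in>{i. i < n \<and> x i \<noteq> 0}. gibbs beta n E i)"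
proof -
  define G where "G = (\<Sum>i\<in>{i. i < n \<and> x i \<noteq> 0}. gibbs beta n E i)"
  have "G > 0"
    unfolding G_def using gibbs_support_pos[OF x_sum] .
  have "W \<in> Wset \<longleftrightarrow> W \<le> - (1 / beta) * ln G" for W
  proof -
    have "W \<in> Wset \<longleftrightarrow> G \<le> exp (- beta * W)"
      unfolding Wset_def G_def using battery_thermo_maj_iff[OF x_nonneg x_sum] by simp
    also have "\<dots> \<longleftrightarrow> ln G \<le> - beta * W"
      using \<open>G > 0\<close> ln_le_cancel_iff[of G "exp (- beta * W)"] by simp
    also have "\<dots> \<longleftrightarrow> W \<le> - (1 / beta) * ln G"
      using beta_pos by (auto simp: field_simps)
    finally show ?thesis .
  qed
  then have "Wset = {..- (1 / beta) * ln G}"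
    by auto
  then show ?thesis
    unfolding G_def by simp
qed

end
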